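(* Let $M$ be a prefix matching of $\Gamma$ and suppose $\Gamma^M$ contains a directed cycle $a_1\to b_1\to a_2\to b_2\to\cdots\to a_p\to b_p\to a_{p+1}=a_1$ with all $a_i\in I_{k,l}(G)$ and $b_i\in I_{k-1,l}(G)$, where each $a_i\to b_i$ is an edge of $\Gamma$ not in $M$ and each $b_i\to a_{i+1}$ is a reversed edge of $M$. Let $d_i$ be the index such that $b_i$ is obtained from $a_i$ by deleting the entry at position $d_i$, and let $(c_i,u_i)$ be such that $a_{i+1}$ is obtained from $b_i=(b_{i,0},\dots,b_{i,k-1})$ by inserting $u_i$ between positions $c_i$ and $c_i+1$, i.e. $a_{i+1}=(b_{i,0},\dots,b_{i,c_i},u_i,b_{i,c_i+1},\dots,b_{i,k-1})$. Taking all indices modulo $p$, we have for all $i$: $d_{i+1}\neq c_i+1$, $d_{i+1}\le c_i+2$, and $d_i\le c_i+1$.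
   Context: $G$ is a finite simple connected graph with shortest-path distance $d$; $\ell(x_0,\dots,x_k)=\sum_{i=0}^{k-1}d(x_i,x_{i+1})$. A sequence is an element of $I_{k,l}(G)=\{(x_0,\dots,x_k)\in V(G)^{k+1}:x_i\ne x_{i+1}\ \forall i,\ \ell(x_0,\dots,x_k)=l\}$. $\Gamma$ is the directed graph on all sequences with an edge $a\to b$ whenever $a=(x_0,\dots,x_k)$, $b=(x_0,\dots,\hat x_i,\dots,x_k)$ for some $1\le i\le k-1$ and $\ell(b)=\ell(a)$. A matching is a set of pairwise vertex-disjoint edges of $\Gamma$; $\Gamma^M$ denotes $\Gamma$ with the edges of $M$ reversed. The matching state of a sequence $(x_0,\dots,x_k)$ is "unmatched", "insert$(i,v)$" (matched to $(x_0,\dots,x_i,v,x_{i+1},\dots,x_k)$) or "delete$(i)$" (matched to $(x_0,\dots,\hat x_i,\dots,x_k)$). A prefix matching is a matching such that whenever $(x_0,\dots,x_k)$ has state insert$(i,v)$ (resp. delete$(i)$), every sequence of the form $(x_0,\dots,x_{i+1},y_{i+2},\dots,y_{k'})$ has the same state. *)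

theory Defs
  imports Main
begin

definition simple_graph :: "'a set \<Rightarrow> ('a \<Rightarrow> 'a \<Rightarrow> bool) \<Rightarrow> bool" where
  "simple_graph V E \<longleftrightarrow> finite V \<and> (\<forall>x y. E x y \<longrightarrow> x \<in> V \<and> y \<in> V)
     \<and> (\<forall>x y. E x y \<longrightarrow> E y x) \<and> (\<forall>x. \<not> E x x)"

definition is_walk :: "('a \<Rightarrow> 'a \<Rightarrow> bool) \<Rightarrow> 'a list \<Rightarrow> bool" where
  "is_walk E ws \<longleftrightarrow> ws \<noteq> [] \<and> (\<forall>j. Suc j < length ws \<longrightarrow> E (ws ! j) (ws ! Suc j))"

definition connected_graph :: "'a set \<Rightarrow> ('a \<Rightarrow> 'a \<Rightarrow> bool) \<Rightarrow> bool" where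
  "connected_graph V E \<longleftrightarrow> (\<forall>x\<in>V. \<forall>y\<in>V. \<exists>ws. is_walk E ws \<and> hd ws = x \<and> last ws = y)"

definition gdist :: "('a \<Rightarrow> 'a \<Rightarrow> bool) \<Rightarrow> 'a \<Rightarrow> 'a \<Rightarrow> nat" where
  "gdist E x y = (LEAST n. \<exists>ws. is_walk E ws \<and> length ws = Suc n \<and> hd ws = x \<and> last ws = y)"

definition seq_len :: "('a \<Rightarrow> 'a \<Rightarrow> bool) \<Rightarrow> 'a list \<Rightarrow> nat" where
  "seq_len E xs = (\<Sum>j<length xs - 1. gdist E (xs ! j) (xs ! Suc j))"

definition is_seq :: "'a set \<Rightarrow> 'a list \<Rightarrow> bool" where
  "is_seq V xs \<longleftrightarrow> xs \<noteq> [] \<and> set xs \<subseteq> V \<and> (\<forall>j. Suc j < length xs \<longrightarrow> xs ! j \<noteq> xs ! Suc j)"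

definition Iset :: "'a set \<Rightarrow> ('a \<Rightarrow> 'a \<Rightarrow> bool) \<Rightarrow> nat \<Rightarrow> nat \<Rightarrow> 'a list set" where
  "Iset V E k l = {xs. is_seq V xs \<and> length xs = Suc k \<and> seq_len E xs = l}"

definition del_at :: "nat \<Rightarrow> 'a list \<Rightarrow> 'a list" where
  "del_at i xs = take i xs @ drop (Suc i) xs"

definition ins_after :: "nat \<Rightarrow> 'a \<Rightarrow> 'a list \<Rightarrow> 'a list" where
  "ins_after i v xs = take (Suc i) xs @ v # drop (Suc i) xs"

definition gamma_edge :: "'a set \<Rightarrow> ('a \<Rightarrow> 'a \<Rightarrow> bool) \<Rightarrow> 'a list \<Rightarrow> 'a list \<Rightarrow> bool" where
  "gamma_edge V E a b \<longleftrightarrow> is_seq V a \<and> is_seq V b \<and>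
     (\<exists>i. 1 \<le> i \<and> Suc i < length a \<and> b = del_at i a) \<and> seq_len E b = seq_len E a"

definition is_matching :: "'a set \<Rightarrow> ('a \<Rightarrow> 'a \<Rightarrow> bool) \<Rightarrow> ('a list \<times> 'a list) set \<Rightarrow> bool" where
  "is_matching V E M \<longleftrightarrow> (\<forall>(a,b)\<in>M. gamma_edge V E a b) \<and>
     (\<forall>e\<in>M. \<forall>e'\<in>M. e \<noteq> e' \<longrightarrow> {fst e, snd e} \<inter> {fst e', snd e'} = {})"

definition state_ins :: "('a list \<times> 'a list) set \<Rightarrow> 'a list \<Rightarrow> nat \<Rightarrow> 'a \<Rightarrow> bool" where
  "state_ins M xs i v \<longleftrightarrow> (ins_after i v xs, xs) \<in> M"

definition state_del :: "('a list \<times> 'a list) set \<Rightarrow> 'a list \<Rightarrow> nat \<Rightarrow> bool" where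
  "state_del M xs i \<longleftrightarrow> (xs, del_at i xs) \<in> M"

definition prefix_matching :: "'a set \<Rightarrow> ('a \<Rightarrow> 'a \<Rightarrow> bool) \<Rightarrow> ('a list \<times> 'a list) set \<Rightarrow> bool" where
  "prefix_matching V E M \<longleftrightarrow> is_matching V E M \<and>
     (\<forall>xs i v. is_seq V xs \<and> state_ins M xs i v \<longrightarrow>
        (\<forall>ys. is_seq V ys \<and> take (i+2) ys = take (i+2) xs \<longrightarrow> state_ins M ys i v)) \<and>
     (\<forall>xs i. is_seq V xs \<and> state_del M xs i \<longrightarrow>
        (\<forall>ys. is_seq V ys \<and> take (i+2) ys = take (i+2) xs \<longrightarrow> state_del M ys i))"

end

theory Submission
  imports Defs
begin

text \<open>
  The states of a prefix matching depend only on a prefix of the sequence, so they survive the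
  deletion of a later entry. In the cycle, a(i+1) is matched by deleting position c(i) + 1 and
  b(i) by inserting after position c(i). If d(i+1) > c(i) + 2, the deletion state passes from
  a(i+1) to b(i+1); if d(i) > c(i) + 1, the insertion state passes from b(i) to a(i). Either way
  some sequence would be matched both to a longer and to a shorter one, which a matching forbids.
  Finally d(i+1) = c(i) + 1 would make the unmatched edge a(i+1) \<rightarrow> b(i+1) the matched one.
\<close>

lemma take_del_at: "n \<le> d \<Longrightarrow> take n (del_at d xs) = take n xs"
  unfolding del_at_def by (simp add: min_def)

lemma del_at_Suc_ins_after: "Suc i \<le> length xs \<Longrightarrow> del_at (Suc i) (ins_after i v xs) = xs"
  unfolding del_at_def ins_after_def by (simp add: min_def)

lemma gamma_edge_length_less: "gamma_edge V E a b \<Longrightarrow> length b < length a"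
  unfolding gamma_edge_def del_at_def by auto

lemma matching_top_not_bottom:
  assumes "is_matching V E M" "(x, y) \<in> M" "(z, x) \<in> M"
  shows False
proof -
  have "gamma_edge V E x y" "gamma_edge V E z x"
    using assms unfolding is_matching_def by auto
  then have "(x, y) \<noteq> (z, x)" by (auto dest: gamma_edge_length_less)
  then have "{x, y} \<inter> {z, x} = {}"
    using assms unfolding is_matching_def by fastforce
  then show False by simp
qed

lemma prefix_matching_state_del_del_at:
  assumes "prefix_matching V E M" "is_seq V xs" "is_seq V (del_at d xs)"
    and "state_del M xs j" "j + 2 \<le> d"
  shows "state_del M (del_at d xs) j"
proof -
  have "take (j + 2) (del_at d xs) = take (j + 2) xs"
    using assms(5) by (simp add: take_del_at)
  then show ?thesis using assms(1-4) unfolding prefix_matching_def by blast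
qed

lemma prefix_matching_state_ins_undo_del_at:
  assumes "prefix_matching V E M" "is_seq V xs" "is_seq V (del_at d xs)"
    and "state_ins M (del_at d xs) j v" "j + 2 \<le> d"
  shows "state_ins M xs j v"
proof -
  have "take (j + 2) xs = take (j + 2) (del_at d xs)"
    using assms(5) by (simp add: take_del_at)
  then show ?thesis using assms(1-4) unfolding prefix_matching_def by blast
qed

theorem lemma3p3:
  fixes V :: "'v set" and E :: "'v \<Rightarrow> 'v \<Rightarrow> bool"
    and M :: "('v list \<times> 'v list) set"
    and k l p :: nat
    and a b :: "nat \<Rightarrow> 'v list" and d c :: "nat \<Rightarrow> nat" and u :: "nat \<Rightarrow> 'v"
  assumes G: "simple_graph V E" "connected_graph V E"
    and PM: "prefix_matching V E M"
    and p: "p \<ge> 1"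
    and per: "\<And>i. a (i + p) = a i" "\<And>i. b (i + p) = b i"
      "\<And>i. c (i + p) = c i" "\<And>i. d (i + p) = d i" "\<And>i. u (i + p) = u i"
    and aI: "\<And>i. a i \<in> Iset V E k l"
    and bI: "\<And>i. b i \<in> Iset V E (k - 1) l"
    and ab: "\<And>i. gamma_edge V E (a i) (b i) \<and> (a i, b i) \<notin> M"
    and ba: "\<And>i. (a (Suc i), b i) \<in> M"
    and dd: "\<And>i. d i < length (a i) \<and> b i = del_at (d i) (a i)"
    and cc: "\<And>i. Suc (c i) < length (b i) \<and> a (Suc i) = ins_after (c i) (u i) (b i)"
  shows "\<forall>i. d (Suc i) \<noteq> c i + 1 \<and> d (Suc i) \<le> c i + 2 \<and> d i \<le> c i + 1"
proof (intro allI conjI)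
  fix i
  have matching: "is_matching V E M" using PM unfolding prefix_matching_def by blast
  have seq: "is_seq V (a j)" "is_seq V (b j)" for j
    using ab[of j] unfolding gamma_edge_def by auto
  have b_del: "b j = del_at (Suc (c j)) (a (Suc j))" for j
    using cc[of j] by (simp add: del_at_Suc_ins_after)
  have a_del: "state_del M (a (Suc j)) (Suc (c j))" for j
    using ba b_del unfolding state_del_def by metis
  have b_ins: "state_ins M (b j) (c j) (u j)" for j
    using ba cc unfolding state_ins_def by metis
  show "d (Suc i) \<noteq> c i + 1"
    using ab[of "Suc i"] ba[of i] dd[of "Suc i"] b_del[of i] by auto
  show "d (Suc i) \<le> c i + 2"
  proof (rule ccontr)
    assume "\<not> d (Suc i) \<le> c i + 2"
    then have "state_del M (b (Suc i)) (Suc (c i))"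
      using prefix_matching_state_del_del_at[OF PM seq(1) _ a_del] seq(2) dd by simp
    then show False
      using matching_top_not_bottom[OF matching _ ba] unfolding state_del_def by blast
  qed
  show "d i \<le> c i + 1"
  proof (rule ccontr)
    assume "\<not> d i \<le> c i + 1"
    then have "state_ins M (a i) (c i) (u i)"
      using prefix_matching_state_ins_undo_del_at[OF PM seq(1), of "d i"] seq(2) b_ins dd by simp
    moreover have "(a i, b (i + p - 1)) \<in> M"
      using ba[of "i + p - 1"] per(1)[of i] p by (simp add: Suc_diff_le)
    ultimately show False
      using matching_top_not_bottom[OF matching] unfolding state_ins_def by blast
  qed
qed

end
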